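(* Consider the following problem (One-Shot TAPF). Given: a connected undirected graph $G=(V,E)$; $N$ stations $s_1,\dots,s_N$, each with a distinct target vertex $g_j\in V$; $M$ agents $a_1,\dots,a_M$, where agent $a_i$ has a start vertex $\mathfrak{s}_i\in V$ and a start time step $t_i\in\{0,\dots,(K-1)T\}$; a processing time $T\in\mathbb{Z}_{>0}$ and an integer $K\ge1$. The time window $[0,KT)$ of each station is divided into working slots $[kT,(k+1)T)$, $k=0,\dots,K-1$. A solution assigns to each agent either the NULL station (the agent is inactive, has no path and is removed from the environment) or a station $s_j$ together with a path $\pi_i$, i.e. a sequence of vertices $\pi_i(t_i)=\mathfrak{s}_i,\pi_i(t_i+1),\dots,\pi_i(kT)=g_j$ for some $k\in\{0,\dots,K-1\}$ with $kT\ge t_i$, where for each consecutive time steps either $(\pi_i(t),\pi_i(t+1))\in E$ or $\pi_i(t+1)=\pi_i(t)$; the agent then occupies working slot $[kT,(k+1)T)$ of station $s_j$ and is removed from the graph from time step $kT+1$ on. Paths of active agents must be collision-free: no two agents occupy the same vertex at the same time step, and no two agents traverse the same edge in opposite directions between the same two consecutive time steps. The total idle time is $T$ times the number of unoccupied working slots summed over all stations. Define the unweighted PITO flow network: a source, a sink, an agent vertex $a_i$ per agent; for every $u\in V$ and $t=0,\dots,(K-1)T$ a location vertex $u_t$ and an auxiliary vertex $u'_t$ with a capacity-$1$ edge $u_t\to u'_t$; for every edge $(u,v)\in E$ and $t=0,\dots,(K-1)T-1$, capacity-$1$ edges $u'_t\to v_{t+1}$ and $v'_t\to u_{t+1}$,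 and for every $u\in V$ and $t=0,\dots,(K-1)T-1$ a capacity-$1$ waiting edge $u'_t\to u_{t+1}$; capacity-$1$ edges source $\to a_i$ and $a_i\to(\mathfrak{s}_i)_{t_i}$; for each station $s_j$ and $k=0,\dots,K-1$ a working slot vertex $s_{j,k}$ with a capacity-$1$ edge $(g_j)'_{kT}\to s_{j,k}$ and a capacity-$1$ edge $s_{j,k}\to$ sink; and for $k=1,\dots,K-1$ an edge $s_{j,k-1}\to s_{j,k}$ of capacity $K$. Then a maximum (integral) flow on the unweighted PITO flow network corresponds to an assignment of stations to agents and collision-free paths for all active agents to their assigned stations (agents carrying no flow being assigned the NULL station) that together minimize the total idle time within the time window $[0,KT)$.
   Context: Edge collisions (two agents swapping along an edge) in a flow solution are resolved by a post-processing that swaps the identities of the two agents and lets them wait one time step; the agents are treated as interchangeable in the flow. An agent at target $g_j$ at time step $kT$ may occupy working slot $[kT,(k+1)T)$ of station $s_j$, with at most one agent per working slot. *)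

theory Defs
  imports Main
begin

text \<open>Vertices of the unweighted PITO flow network.
  Loc u t = u_t, Aux u t = u'_t, Slot j k = working slot vertex s_{j,k}.
  Stations are indexed 0..N-1, agents 0..M-1.\<close>

datatype 'v pnode = Src | Snk | Agent nat | Loc 'v nat | Aux 'v nat | Slot nat nat

text \<open>Capacities of the PITO network (0 = no edge).  E is a symmetric edge relation,
  so each undirected edge {u,v} yields both u'_t -> v_{t+1} and v'_t -> u_{t+1};
  the case u = v is the waiting edge.\<close>

definition pito_cap ::
  "'v set \<Rightarrow> ('v \<times> 'v) set \<Rightarrow> nat \<Rightarrow> (nat \<Rightarrow> 'v) \<Rightarrow> nat \<Rightarrow> (nat \<Rightarrow> 'v) \<Rightarrow> (nat \<Rightarrow> nat)
   \<Rightarrow> nat \<Rightarrow> nat \<Rightarrow> 'v pnode \<Rightarrow> 'v pnode \<Rightarrow> nat" where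
  "pito_cap V E N g M sv st T K x y =
    (case x of
       Src \<Rightarrow> (case y of Agent i \<Rightarrow> if i < M then 1 else 0 | _ \<Rightarrow> 0)
     | Agent i \<Rightarrow> (case y of Loc u t \<Rightarrow> if i < M \<and> u = sv i \<and> t = st i then 1 else 0 | _ \<Rightarrow> 0)
     | Loc u t \<Rightarrow> (case y of Aux u' t' \<Rightarrow>
           if u \<in> V \<and> u' = u \<and> t' = t \<and> t \<le> (K - 1) * T then 1 else 0 | _ \<Rightarrow> 0)
     | Aux u t \<Rightarrow> (case y of
           Loc v t' \<Rightarrow> if u \<in> V \<and> v \<in> V \<and> t' = Suc t \<and> t < (K - 1) * T
                          \<and> ((u, v) \<in> E \<or> v = u) then 1 else 0
         | Slot j k \<Rightarrow> if j < N \<and> k < K \<and> u = g j \<and> t = k * T then 1 else 0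
         | _ \<Rightarrow> 0)
     | Slot j k \<Rightarrow> (case y of
           Snk \<Rightarrow> if j < N \<and> k < K then 1 else 0
         | Slot j' k' \<Rightarrow> if j < N \<and> j' = j \<and> k' = Suc k \<and> k' < K then K else 0
         | _ \<Rightarrow> 0)
     | Snk \<Rightarrow> 0)"

definition pito_nodes :: "'v set \<Rightarrow> nat \<Rightarrow> nat \<Rightarrow> nat \<Rightarrow> nat \<Rightarrow> 'v pnode set" where
  "pito_nodes V N M T K =
     {Src, Snk} \<union> Agent ` {..<M}
     \<union> (\<lambda>(u, t). Loc u t) ` (V \<times> {..(K - 1) * T})
     \<union> (\<lambda>(u, t). Aux u t) ` (V \<times> {..(K - 1) * T})
     \<union> (\<lambda>(j, k). Slot j k) ` ({..<N} \<times> {..<K})"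

definition pito_flow ::
  "'v set \<Rightarrow> ('v \<times> 'v) set \<Rightarrow> nat \<Rightarrow> (nat \<Rightarrow> 'v) \<Rightarrow> nat \<Rightarrow> (nat \<Rightarrow> 'v) \<Rightarrow> (nat \<Rightarrow> nat)
   \<Rightarrow> nat \<Rightarrow> nat \<Rightarrow> ('v pnode \<Rightarrow> 'v pnode \<Rightarrow> nat) \<Rightarrow> bool" where
  "pito_flow V E N g M sv st T K f \<longleftrightarrow>
     (\<forall>x y. f x y \<le> pito_cap V E N g M sv st T K x y) \<and>
     (\<forall>x \<in> pito_nodes V N M T K - {Src, Snk}.
        (\<Sum>y\<in>pito_nodes V N M T K. f y x) = (\<Sum>y\<in>pito_nodes V N M T K. f x y))"

definition flow_value :: "'v set \<Rightarrow> nat \<Rightarrow> nat \<Rightarrow> nat \<Rightarrow> nat \<Rightarrow> ('v pnode \<Rightarrow> 'v pnode \<Rightarrow> nat) \<Rightarrow> nat" where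
  "flow_value V N M T K f = (\<Sum>y\<in>pito_nodes V N M T K. f Src y)"

definition pito_max_flow ::
  "'v set \<Rightarrow> ('v \<times> 'v) set \<Rightarrow> nat \<Rightarrow> (nat \<Rightarrow> 'v) \<Rightarrow> nat \<Rightarrow> (nat \<Rightarrow> 'v) \<Rightarrow> (nat \<Rightarrow> nat)
   \<Rightarrow> nat \<Rightarrow> nat \<Rightarrow> ('v pnode \<Rightarrow> 'v pnode \<Rightarrow> nat) \<Rightarrow> bool" where
  "pito_max_flow V E N g M sv st T K f \<longleftrightarrow>
     pito_flow V E N g M sv st T K f \<and>
     (\<forall>f'. pito_flow V E N g M sv st T K f' \<longrightarrow> flow_value V N M T K f' \<le> flow_value V N M T K f)"

text \<open>Solutions of One-Shot TAPF.  asg i = None: NULL station (inactive agent);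
  asg i = Some j: station j, agent reaches g j at time step kk i * T along path pi i
  (pi i t for st i \<le> t \<le> kk i * T) and occupies working slot kk i of station j.\<close>

definition present :: "(nat \<Rightarrow> nat) \<Rightarrow> (nat \<Rightarrow> nat option) \<Rightarrow> (nat \<Rightarrow> nat) \<Rightarrow> nat \<Rightarrow> nat \<Rightarrow> nat \<Rightarrow> bool" where
  "present st asg kk T i t \<longleftrightarrow> asg i \<noteq> None \<and> st i \<le> t \<and> t \<le> kk i * T"

definition tapf_solution ::
  "('v \<times> 'v) set \<Rightarrow> nat \<Rightarrow> (nat \<Rightarrow> 'v) \<Rightarrow> nat \<Rightarrow> (nat \<Rightarrow> 'v) \<Rightarrow> (nat \<Rightarrow> nat)
   \<Rightarrow> nat \<Rightarrow> nat \<Rightarrow> (nat \<Rightarrow> nat option) \<Rightarrow> (nat \<Rightarrow> nat) \<Rightarrow> (nat \<Rightarrow> nat \<Rightarrow> 'v) \<Rightarrow> bool" where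
  "tapf_solution E N g M sv st T K asg kk \<pi> \<longleftrightarrow>
     (\<forall>i<M. \<forall>j. asg i = Some j \<longrightarrow>
        j < N \<and> kk i < K \<and> st i \<le> kk i * T \<and>
        \<pi> i (st i) = sv i \<and> \<pi> i (kk i * T) = g j \<and>
        (\<forall>t. st i \<le> t \<and> t < kk i * T \<longrightarrow>
             (\<pi> i t, \<pi> i (Suc t)) \<in> E \<or> \<pi> i (Suc t) = \<pi> i t)) \<and>
     (\<forall>i<M. \<forall>i'<M. i \<noteq> i' \<longrightarrow> asg i \<noteq> None \<longrightarrow> asg i = asg i' \<longrightarrow> kk i \<noteq> kk i') \<and>
     (\<forall>i<M. \<forall>i'<M. \<forall>t. i \<noteq> i' \<longrightarrow> present st asg kk T i t \<longrightarrow> present st asg kk T i' t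
        \<longrightarrow> \<pi> i t \<noteq> \<pi> i' t) \<and>
     (\<forall>i<M. \<forall>i'<M. \<forall>t. i \<noteq> i' \<longrightarrow>
        present st asg kk T i t \<longrightarrow> present st asg kk T i (Suc t) \<longrightarrow>
        present st asg kk T i' t \<longrightarrow> present st asg kk T i' (Suc t) \<longrightarrow>
        \<not> (\<pi> i t = \<pi> i' (Suc t) \<and> \<pi> i (Suc t) = \<pi> i' t))"

definition occupied_slots :: "nat \<Rightarrow> nat \<Rightarrow> nat \<Rightarrow> (nat \<Rightarrow> nat option) \<Rightarrow> (nat \<Rightarrow> nat) \<Rightarrow> (nat \<times> nat) set" where
  "occupied_slots N M K asg kk = {(j, k). j < N \<and> k < K \<and> (\<exists>i<M. asg i = Some j \<and> kk i = k)}"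

definition idle_time :: "nat \<Rightarrow> nat \<Rightarrow> nat \<Rightarrow> nat \<Rightarrow> (nat \<Rightarrow> nat option) \<Rightarrow> (nat \<Rightarrow> nat) \<Rightarrow> nat" where
  "idle_time N M T K asg kk = T * (N * K - card (occupied_slots N M K asg kk))"

end

theory Submission
  imports Defs "HOL-Combinatorics.Transposition"
begin

text \<open>
  Location and auxiliary vertices carry at most one unit, so an integral flow splits into
  vertex-disjoint unit paths, one for each agent whose source edge is saturated. Each path runs
  through the time-expanded graph from the agent's start vertex to some (g j)'_{kT} and leaves it
  through the slot vertex s_{j,k}; read as agent paths they form a TAPF solution whose occupied
  slots are exactly the saturated slot edges, provided no two paths cross along an edge. A crossing
  u'_t -> v_{t+1}, v'_t -> u_{t+1} is removed beforehand by rerouting both units along the waiting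
  edges, which keeps a flow of the same value and strictly decreases the number of non-waiting
  moves. Conversely, the agent paths of any TAPF solution form a flow whose value is its number of
  occupied slots. Hence the solution read off a maximum flow occupies the most slots, i.e. has the
  least idle time.
\<close>

definition walk_edges :: "(nat \<Rightarrow> 'a) \<Rightarrow> nat \<Rightarrow> ('a \<times> 'a) set" where
  "walk_edges w n = {(w m, w (Suc m)) | m. m < n}"

lemma card_walk_edges_in_eq_out:
  assumes inj: "inj_on w {..n}" and x: "x \<noteq> w 0" "x \<noteq> w n"
  shows "card {y. (y, x) \<in> walk_edges w n} = card {y. (x, y) \<in> walk_edges w n}"
proof -
  have "{y. (y, x) \<in> walk_edges w n} = w ` {m. m < n \<and> w (Suc m) = x}"
    by (auto simp: walk_edges_def)
  also have "card \<dots> = card {m. m < n \<and> w (Suc m) = x}"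
    by (rule card_image, rule inj_on_subset[OF inj]) auto
  also have "\<dots> = card (Suc ` {m. m < n \<and> w (Suc m) = x})"
    by (simp add: card_image)
  also have "Suc ` {m. m < n \<and> w (Suc m) = x} = {m. m < n \<and> w m = x}"
  proof (intro set_eqI iffI)
    fix m assume "m \<in> {m. m < n \<and> w m = x}"
    moreover then obtain m' where "m = Suc m'" using x(1) by (cases m) auto
    ultimately show "m \<in> Suc ` {m. m < n \<and> w (Suc m) = x}" by auto
  qed (use x(2) in \<open>auto intro!: Suc_lessI\<close>)
  also have "card \<dots> = card ((\<lambda>m. w (Suc m)) ` {m. m < n \<and> w m = x})"
    by (rule card_image[symmetric], rule inj_onI) (use inj in \<open>auto dest: inj_onD\<close>)
  also have "(\<lambda>m. w (Suc m)) ` {m. m < n \<and> w m = x} = {y. (x, y) \<in> walk_edges w n}"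
    by (auto simp: walk_edges_def)
  finally show ?thesis .
qed

lemma nat_sum_le_1_unique:
  fixes F :: "'a \<Rightarrow> nat"
  assumes "finite A" "sum F A \<le> 1" "a \<in> A" "b \<in> A" "F a \<noteq> 0" "F b \<noteq> 0"
  shows "a = b"
proof (rule ccontr)
  assume "a \<noteq> b"
  then have "F a + F b \<le> sum F A"
    using sum_mono2[OF assms(1), of "{a, b}" F] assms(3,4) by simp
  with assms(2,5,6) show False by simp
qed

lemma nat_sum_le_1_nonzero_iff:
  fixes F :: "'a \<Rightarrow> nat"
  assumes "finite A" "sum F A \<le> 1" "\<And>y. F y \<noteq> 0 \<Longrightarrow> y \<in> A"
  shows "(\<exists>y. F y \<noteq> 0) \<longleftrightarrow> sum F A = 1"
proof
  assume "\<exists>y. F y \<noteq> 0"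
  then obtain y where "F y \<noteq> 0" ..
  moreover have "F y \<le> sum F A"
    using member_le_sum[OF assms(3)[OF \<open>F y \<noteq> 0\<close>] _ assms(1), of F] by simp
  ultimately show "sum F A = 1" using assms(2) by linarith
next
  assume "sum F A = 1"
  then show "\<exists>y. F y \<noteq> 0" by (metis sum.not_neutral_contains_not_neutral zero_neq_one)
qed

section \<open>Flows in the PITO network\<close>

locale pito_network =
  fixes V :: "'v set" and E :: "('v \<times> 'v) set"
    and N M T K :: nat and g :: "nat \<Rightarrow> 'v" and sv :: "nat \<Rightarrow> 'v" and st :: "nat \<Rightarrow> nat"
  assumes finite_V: "finite V" and E_subset: "E \<subseteq> V \<times> V"
    and g_in_V: "\<forall>j<N. g j \<in> V" and inj_g: "inj_on g {..<N}"
    and start_in_window: "\<forall>i<M. sv i \<in> V \<and> st i \<le> (K - 1) * T"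
    and T_pos: "T > 0"
begin

abbreviation "cap \<equiv> pito_cap V E N g M sv st T K"
abbreviation "nodes \<equiv> pito_nodes V N M T K"
abbreviation "is_flow \<equiv> pito_flow V E N g M sv st T K"

lemma mem_nodes [simp]:
  "Src \<in> nodes" "Snk \<in> nodes" "Agent i \<in> nodes \<longleftrightarrow> i < M"
  "Loc u t \<in> nodes \<longleftrightarrow> u \<in> V \<and> t \<le> (K - 1) * T"
  "Aux u t \<in> nodes \<longleftrightarrow> u \<in> V \<and> t \<le> (K - 1) * T"
  "Slot j k \<in> nodes \<longleftrightarrow> j < N \<and> k < K"
  unfolding pito_nodes_def by auto

lemma finite_nodes: "finite nodes"
  unfolding pito_nodes_def using finite_V by auto

lemma cap_nonzero_nodes:
  assumes "cap x y \<noteq> 0" shows "x \<in> nodes" "y \<in> nodes"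
proof -
  have "k * T \<le> (K - 1) * T" if "k < K" for k
    using that by (intro mult_le_mono1) simp
  with assms start_in_window g_in_V show "x \<in> nodes" "y \<in> nodes"
    by (cases x; cases y; auto simp: pito_cap_def split: if_splits)+
qed

lemma cap_le_1: "(\<And>j k. x \<noteq> Slot j k) \<Longrightarrow> cap x y \<le> 1"
  by (cases x; cases y) (auto simp: pito_cap_def)

lemma cap_into_Loc:
  assumes "cap y (Loc u t) \<noteq> 0"
  obtains i where "y = Agent i" "i < M" "u = sv i" "t = st i"
  | v t' where "y = Aux v t'" "t = Suc t'"
  using assms by (cases y) (auto simp: pito_cap_def split: if_splits)

lemma cap_out_of_Aux:
  assumes "cap (Aux u t) y \<noteq> 0"
  obtains v where "y = Loc v (Suc t)" "u \<in> V" "v \<in> V" "t < (K - 1) * T" "(u, v) \<in> E \<or> v = u"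
  | j k where "y = Slot j k" "j < N" "k < K" "u = g j" "t = k * T"
  using assms by (cases y) (auto simp: pito_cap_def split: if_splits)

lemma cap_only_out_of_Loc: "cap (Loc u t) y \<noteq> 0 \<Longrightarrow> y = Aux u t"
  by (cases y) (auto simp: pito_cap_def split: if_splits)

lemma cap_only_into_Aux: "cap y (Aux u t) \<noteq> 0 \<Longrightarrow> y = Loc u t"
  by (cases y) (auto simp: pito_cap_def split: if_splits)

lemma cap_only_into_Agent: "cap y (Agent i) \<noteq> 0 \<Longrightarrow> y = Src"
  by (cases y) (auto simp: pito_cap_def split: if_splits)

lemma cap_only_out_of_Agent: "cap (Agent i) y \<noteq> 0 \<Longrightarrow> y = Loc (sv i) (st i)"
  by (cases y) (auto simp: pito_cap_def split: if_splits)

context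
  fixes h assumes flow: "is_flow h"
begin

lemma flow_le_cap: "h x y \<le> cap x y"
  using flow unfolding pito_flow_def by auto

lemma flow_conservation:
  "x \<in> nodes \<Longrightarrow> x \<noteq> Src \<Longrightarrow> x \<noteq> Snk \<Longrightarrow> (\<Sum>y\<in>nodes. h y x) = (\<Sum>y\<in>nodes. h x y)"
  using flow unfolding pito_flow_def by auto

lemma cap_nonzero_if_flow: "h x y \<noteq> 0 \<Longrightarrow> cap x y \<noteq> 0"
  using flow_le_cap[of x y] by linarith

lemma flow_eq_1:
  assumes "h x y \<noteq> 0" "\<And>j k. x \<noteq> Slot j k" shows "h x y = 1"
  using flow_le_cap[of x y] cap_le_1[OF assms(2), of y] assms(1) by linarith

lemma sum_nodes_single:
  assumes "x \<in> nodes" "\<And>y. y \<noteq> x \<Longrightarrow> F y = 0"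
  shows "(\<Sum>y\<in>nodes. F y) = (F x :: nat)"
  using sum.mono_neutral_right[OF finite_nodes, of "{x}" F] assms by auto

lemma inflow_Loc: "(\<Sum>y\<in>nodes. h y (Loc u t)) = h (Loc u t) (Aux u t)"
proof (cases "Loc u t \<in> nodes")
  case True
  then show ?thesis
    using flow_conservation[of "Loc u t"]
      sum_nodes_single[of "Aux u t" "h (Loc u t)"] cap_only_out_of_Loc cap_nonzero_if_flow
    by fastforce
next
  case False
  then show ?thesis using cap_nonzero_if_flow cap_nonzero_nodes by (metis sum.neutral)
qed

lemma outflow_Aux: "(\<Sum>y\<in>nodes. h (Aux u t) y) = h (Loc u t) (Aux u t)"
proof (cases "Aux u t \<in> nodes")
  case True
  then show ?thesis
    using flow_conservation[of "Aux u t"]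
      sum_nodes_single[of "Loc u t" "\<lambda>y. h y (Aux u t)"] cap_only_into_Aux cap_nonzero_if_flow
    by fastforce
next
  case False
  then show ?thesis using cap_nonzero_if_flow cap_nonzero_nodes by (metis sum.neutral)
qed

lemma flow_out_of_Agent: "i < M \<Longrightarrow> h (Agent i) (Loc (sv i) (st i)) = h Src (Agent i)"
  using flow_conservation[of "Agent i"] start_in_window
    sum_nodes_single[of Src "\<lambda>y. h y (Agent i)"] cap_only_into_Agent
    sum_nodes_single[of "Loc (sv i) (st i)" "h (Agent i)"] cap_only_out_of_Agent cap_nonzero_if_flow
  by fastforce

lemma throughput_le_1: "h (Loc u t) (Aux u t) \<le> 1"
  using flow_le_cap[of "Loc u t" "Aux u t"] cap_le_1[of "Loc u t" "Aux u t"] by simp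

lemma inflow_Loc_unique: "h y (Loc u t) \<noteq> 0 \<Longrightarrow> h y' (Loc u t) \<noteq> 0 \<Longrightarrow> y = y'"
  using nat_sum_le_1_unique[OF finite_nodes, of "\<lambda>y. h y (Loc u t)"] inflow_Loc throughput_le_1
    cap_nonzero_if_flow cap_nonzero_nodes by metis

lemma outflow_Aux_unique: "h (Aux u t) y \<noteq> 0 \<Longrightarrow> h (Aux u t) y' \<noteq> 0 \<Longrightarrow> y = y'"
  using nat_sum_le_1_unique[OF finite_nodes, of "h (Aux u t)"] outflow_Aux throughput_le_1
    cap_nonzero_if_flow cap_nonzero_nodes by metis

lemma Loc_used_iff: "(\<exists>y. h y (Loc u t) \<noteq> 0) \<longleftrightarrow> h (Loc u t) (Aux u t) = 1"
  using nat_sum_le_1_nonzero_iff[OF finite_nodes, of "\<lambda>y. h y (Loc u t)"] inflow_Loc throughput_le_1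
    cap_nonzero_if_flow cap_nonzero_nodes by metis

lemma Aux_used_iff: "(\<exists>y. h (Aux u t) y \<noteq> 0) \<longleftrightarrow> h (Loc u t) (Aux u t) = 1"
  using nat_sum_le_1_nonzero_iff[OF finite_nodes, of "h (Aux u t)"] outflow_Aux throughput_le_1
    cap_nonzero_if_flow cap_nonzero_nodes by metis

lemma flow_value_eq_card: "flow_value V N M T K h = card {i. i < M \<and> h Src (Agent i) = 1}"
proof -
  have "flow_value V N M T K h = (\<Sum>y\<in>Agent ` {..<M}. h Src y)"
    unfolding flow_value_def
  proof (rule sum.mono_neutral_right[OF finite_nodes])
    show "\<forall>y\<in>nodes - Agent ` {..<M}. h Src y = 0"
      using cap_nonzero_if_flow by (force simp: pito_cap_def split: pnode.splits if_splits)
  qed auto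
  also have "\<dots> = (\<Sum>i<M. h Src (Agent i))"
    by (simp add: sum.reindex inj_on_def)
  also have "\<dots> = (\<Sum>i<M. of_bool (h Src (Agent i) = 1))"
  proof (rule sum.cong[OF refl])
    fix i assume "i \<in> {..<M}"
    then have "h Src (Agent i) \<le> 1" using flow_le_cap[of Src "Agent i"] by (simp add: pito_cap_def)
    then show "h Src (Agent i) = of_bool (h Src (Agent i) = 1)" by auto
  qed
  finally show ?thesis by (simp add: Int_def)
qed

end

end

section \<open>Removing edge swaps\<close>

definition is_move :: "'v pnode \<Rightarrow> 'v pnode \<Rightarrow> bool" where
  "is_move x y \<longleftrightarrow> (\<exists>u t v t'. x = Aux u t \<and> y = Loc v t')"

definition proper_moves :: "('v pnode \<Rightarrow> 'v pnode \<Rightarrow> nat) \<Rightarrow> ('v \<times> 'v \<times> nat) set" where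
  "proper_moves h = {(a, b, t). a \<noteq> b \<and> h (Aux a t) (Loc b (Suc t)) \<noteq> 0}"

definition swap_free :: "('v pnode \<Rightarrow> 'v pnode \<Rightarrow> nat) \<Rightarrow> bool" where
  "swap_free h \<longleftrightarrow>
     (\<forall>a b t. a \<noteq> b \<longrightarrow> h (Aux a t) (Loc b (Suc t)) = 1 \<longrightarrow> h (Aux b t) (Loc a (Suc t)) \<noteq> 1)"

text \<open>The flow analogue of letting two swapping agents exchange identities and wait.\<close>

definition uncross ::
  "('v pnode \<Rightarrow> 'v pnode \<Rightarrow> nat) \<Rightarrow> 'v \<Rightarrow> 'v \<Rightarrow> nat \<Rightarrow> 'v pnode \<Rightarrow> 'v pnode \<Rightarrow> nat" where
  "uncross h a b t x y =
     (if x = Aux a t \<or> x = Aux b t then h x (transpose (Loc a (Suc t)) (Loc b (Suc t)) y) else h x y)"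

lemma uncross_eq_off_moves: "\<not> is_move x y \<Longrightarrow> uncross h a b t x y = h x y"
  by (auto simp: uncross_def is_move_def transpose_def)

context pito_network
begin

lemma cap_move:
  "cap (Aux u t) (Loc v t') \<noteq> 0 \<Longrightarrow>
    t' = Suc t \<and> u \<in> V \<and> v \<in> V \<and> t < (K - 1) * T \<and> ((u, v) \<in> E \<or> v = u)"
  by (auto simp: pito_cap_def split: if_splits)

lemma finite_proper_moves:
  assumes "is_flow h" shows "finite (proper_moves h)"
proof (rule finite_subset)
  show "proper_moves h \<subseteq> V \<times> V \<times> {..<(K - 1) * T}"
  proof
    fix p assume "p \<in> proper_moves h"
    then obtain a b t where "p = (a, b, t)" "h (Aux a t) (Loc b (Suc t)) \<noteq> 0"
      by (auto simp: proper_moves_def)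
    with cap_move[OF cap_nonzero_if_flow[OF assms]] show "p \<in> V \<times> V \<times> {..<(K - 1) * T}"
      by auto
  qed
qed (use finite_V in auto)

context
  fixes h a b t
  assumes flow: "is_flow h" and "a \<noteq> b"
    and crossing: "h (Aux a t) (Loc b (Suc t)) = 1" "h (Aux b t) (Loc a (Suc t)) = 1"
begin

private lemma crossing_block:
  "h (Aux a t) (Loc a (Suc t)) = 0" "h (Aux b t) (Loc b (Suc t)) = 0"
  "a \<in> V" "b \<in> V" "t < (K - 1) * T"
  using outflow_Aux_unique[OF flow, of a t "Loc a (Suc t)" "Loc b (Suc t)"]
    outflow_Aux_unique[OF flow, of b t "Loc b (Suc t)" "Loc a (Suc t)"]
    cap_move[OF cap_nonzero_if_flow[OF flow, of "Aux a t" "Loc b (Suc t)"]] crossing \<open>a \<noteq> b\<close>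
  by auto

private lemma uncross_block:
  "uncross h a b t (Aux a t) (Loc a (Suc t)) = 1" "uncross h a b t (Aux a t) (Loc b (Suc t)) = 0"
  "uncross h a b t (Aux b t) (Loc a (Suc t)) = 0" "uncross h a b t (Aux b t) (Loc b (Suc t)) = 1"
  using crossing crossing_block \<open>a \<noteq> b\<close> by (auto simp: uncross_def)

private lemma uncross_inflow_Loc:
  assumes "x = Loc a (Suc t) \<or> x = Loc b (Suc t)"
  shows "uncross h a b t y x = h (transpose (Aux a t) (Aux b t) y) x"
  using assms crossing crossing_block \<open>a \<noteq> b\<close> by (auto simp: uncross_def transpose_def)

lemma uncross_is_flow: "is_flow (uncross h a b t)"
  unfolding pito_flow_def
proof (intro conjI allI ballI)
  fix x y
  show "uncross h a b t x y \<le> cap x y"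
  proof (cases "(x = Aux a t \<or> x = Aux b t) \<and> (y = Loc a (Suc t) \<or> y = Loc b (Suc t))")
    case True
    then show ?thesis using uncross_block crossing_block by (auto simp: pito_cap_def)
  next
    case False
    then have "uncross h a b t x y = h x y" by (auto simp: uncross_def transpose_def)
    then show ?thesis using flow_le_cap[OF flow] by simp
  qed
next
  fix x assume x: "x \<in> nodes - {Src, Snk}"
  have in_nodes: "Aux a t \<in> nodes" "Aux b t \<in> nodes" "Loc a (Suc t) \<in> nodes" "Loc b (Suc t) \<in> nodes"
    using crossing_block by auto
  have "(\<Sum>y\<in>nodes. uncross h a b t y x) = (\<Sum>y\<in>nodes. h y x)"
  proof (cases "x = Loc a (Suc t) \<or> x = Loc b (Suc t)")
    case True
    then show ?thesis
      using uncross_inflow_Loc sum.reindex_bij_betw[of "transpose (Aux a t) (Aux b t)" nodes nodes]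
        in_nodes by simp
  next
    case False
    then show ?thesis by (intro sum.cong) (auto simp: uncross_def transpose_apply_other)
  qed
  also have "\<dots> = (\<Sum>y\<in>nodes. h x y)" using flow_conservation[OF flow] x by simp
  also have "\<dots> = (\<Sum>y\<in>nodes. uncross h a b t x y)"
  proof (cases "x = Aux a t \<or> x = Aux b t")
    case True
    then show ?thesis
      using sum.reindex_bij_betw[of "transpose (Loc a (Suc t)) (Loc b (Suc t))" nodes nodes "h x"]
        in_nodes by (simp add: uncross_def)
  qed (simp add: uncross_def)
  finally show "(\<Sum>y\<in>nodes. uncross h a b t y x) = (\<Sum>y\<in>nodes. uncross h a b t x y)" .
qed

lemma proper_moves_uncross: "proper_moves (uncross h a b t) \<subset> proper_moves h"
proof
  show "proper_moves (uncross h a b t) \<subseteq> proper_moves h"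
  proof
    fix p assume "p \<in> proper_moves (uncross h a b t)"
    then obtain a' b' t' where p: "p = (a', b', t')" "a' \<noteq> b'"
      and moved: "uncross h a b t (Aux a' t') (Loc b' (Suc t')) \<noteq> 0"
      by (auto simp: proper_moves_def)
    then have "uncross h a b t (Aux a' t') (Loc b' (Suc t')) = h (Aux a' t') (Loc b' (Suc t'))"
      using uncross_block by (auto simp: uncross_def transpose_def)
    with p moved show "p \<in> proper_moves h" by (simp add: proper_moves_def)
  qed
  have "(a, b, t) \<in> proper_moves h"
    using crossing \<open>a \<noteq> b\<close> by (simp add: proper_moves_def)
  moreover have "(a, b, t) \<notin> proper_moves (uncross h a b t)"
    using uncross_block by (simp add: proper_moves_def)
  ultimately show "proper_moves (uncross h a b t) \<noteq> proper_moves h" by blast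
qed

end

lemma exists_swap_free_flow:
  assumes "is_flow f"
  obtains h where "is_flow h" "swap_free h" "\<And>x y. \<not> is_move x y \<Longrightarrow> h x y = f x y"
proof -
  let ?P = "\<lambda>h. is_flow h \<and> (\<forall>x y. \<not> is_move x y \<longrightarrow> h x y = f x y)"
  obtain h where h: "?P h" and least: "\<And>h'. ?P h' \<Longrightarrow> card (proper_moves h) \<le> card (proper_moves h')"
    using ex_has_least_nat[of ?P f "card \<circ> proper_moves"] assms by auto
  have "swap_free h"
    unfolding swap_free_def
  proof (intro allI impI notI)
    fix a b t assume ab: "a \<noteq> b" "h (Aux a t) (Loc b (Suc t)) = 1" "h (Aux b t) (Loc a (Suc t)) = 1"
    have "?P (uncross h a b t)"
      using uncross_is_flow[OF _ ab] h by (simp add: uncross_eq_off_moves)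
    moreover have "card (proper_moves (uncross h a b t)) < card (proper_moves h)"
      using psubset_card_mono[OF finite_proper_moves proper_moves_uncross[OF _ ab]] h by blast
    ultimately show False using least by (meson not_le)
  qed
  with h that show ?thesis by blast
qed

end

section \<open>Decomposing a swap-free flow into agent paths\<close>

primrec follow :: "('v \<Rightarrow> nat \<Rightarrow> 'v) \<Rightarrow> 'v \<Rightarrow> nat \<Rightarrow> nat \<Rightarrow> 'v" where
  "follow step v t 0 = v"
| "follow step v t (Suc n) = step (follow step v t n) (t + n)"

locale swap_free_flow = pito_network V E N M T K g sv st
  for V :: "'v set" and E N M T K g sv st +
  fixes h :: "'v pnode \<Rightarrow> 'v pnode \<Rightarrow> nat"
  assumes flow: "is_flow h" and swap_free: "swap_free h"
begin

text \<open>At most one unit leaves u'_t, so the choice is unique wherever the flow is followed.\<close>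

definition successor :: "'v \<Rightarrow> nat \<Rightarrow> 'v" where
  "successor u t = (SOME v. h (Aux u t) (Loc v (Suc t)) = 1)"

definition agent_path :: "nat \<Rightarrow> nat \<Rightarrow> 'v" where
  "agent_path i t = follow successor (sv i) (st i) (t - st i)"

definition at_station :: "nat \<Rightarrow> nat \<Rightarrow> bool" where
  "at_station i t \<longleftrightarrow> (\<exists>j k. h (Aux (agent_path i t) t) (Slot j k) \<noteq> 0)"

definition active :: "nat \<Rightarrow> bool" where
  "active i \<longleftrightarrow> i < M \<and> h Src (Agent i) = 1"

definition arrival :: "nat \<Rightarrow> nat" where
  "arrival i = (LEAST t. st i \<le> t \<and> at_station i t)"

definition station :: "nat \<Rightarrow> nat option" where
  "station i = (if active i
     then Some (SOME j. \<exists>k. h (Aux (agent_path i (arrival i)) (arrival i)) (Slot j k) \<noteq> 0)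
     else None)"

definition slot :: "nat \<Rightarrow> nat" where
  "slot i = arrival i div T"

lemma agent_path_start: "agent_path i (st i) = sv i"
  by (simp add: agent_path_def)

lemma agent_path_Suc: "st i \<le> t \<Longrightarrow> agent_path i (Suc t) = successor (agent_path i t) t"
  by (simp add: agent_path_def Suc_diff_le)

lemma flow_to_successor:
  assumes "h (Loc u t) (Aux u t) = 1" "\<And>j k. h (Aux u t) (Slot j k) = 0"
  shows "h (Aux u t) (Loc (successor u t) (Suc t)) = 1"
proof -
  obtain y where y: "h (Aux u t) y \<noteq> 0"
    using Aux_used_iff[OF flow] assms(1) by blast
  then obtain v where "y = Loc v (Suc t)"
    using assms(2) by (metis cap_nonzero_if_flow[OF flow] cap_out_of_Aux)
  with y have "h (Aux u t) (Loc v (Suc t)) = 1"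
    using flow_eq_1[OF flow] by blast
  then show ?thesis
    unfolding successor_def by (rule someI)
qed

lemma path_flow_until_station:
  assumes "active i" "st i \<le> t" "\<And>t'. st i \<le> t' \<Longrightarrow> t' < t \<Longrightarrow> \<not> at_station i t'"
  shows "h (Loc (agent_path i t) t) (Aux (agent_path i t) t) = 1"
  using assms(2,3)
proof (induction t rule: dec_induct)
  case base
  have "h (Agent i) (Loc (sv i) (st i)) \<noteq> 0"
    using flow_out_of_Agent[OF flow] assms(1) by (simp add: active_def)
  then show ?case
    using Loc_used_iff[OF flow] by (auto simp: agent_path_start)
next
  case (step t)
  let ?u = "agent_path i t"
  have "h (Aux ?u t) (Loc (successor ?u t) (Suc t)) = 1"
    using flow_to_successor step step.prems[of t] by (simp add: at_station_def)
  then show ?case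
    using Loc_used_iff[OF flow] agent_path_Suc[OF step.hyps(1)] by (metis zero_neq_one)
qed

lemma active_reaches_station:
  assumes "active i" shows "\<exists>t\<ge>st i. at_station i t"
proof (rule ccontr)
  assume "\<not> ?thesis"
  moreover have "st i \<le> Suc ((K - 1) * T)"
    using assms start_in_window by (simp add: active_def le_SucI)
  ultimately have "h (Loc (agent_path i (Suc ((K - 1) * T))) (Suc ((K - 1) * T)))
      (Aux (agent_path i (Suc ((K - 1) * T))) (Suc ((K - 1) * T))) = 1"
    using path_flow_until_station[OF assms] by blast
  then show False
    \<comment> \<open>there are no location vertices after time (K - 1) * T\<close>
    using cap_nonzero_nodes(1) cap_nonzero_if_flow[OF flow] by (metis mem_nodes(4) zero_neq_one Suc_n_not_le_n)
qed

lemma arrival: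
  assumes "active i" shows "st i \<le> arrival i" "at_station i (arrival i)"
  using LeastI_ex[OF active_reaches_station[OF assms, unfolded Bex_def]]
  unfolding arrival_def by auto

lemma before_arrival: "st i \<le> t \<Longrightarrow> t < arrival i \<Longrightarrow> \<not> at_station i t"
  unfolding arrival_def using not_less_Least by blast

lemma path_flow:
  "active i \<Longrightarrow> st i \<le> t \<Longrightarrow> t \<le> arrival i \<Longrightarrow>
    h (Loc (agent_path i t) t) (Aux (agent_path i t) t) = 1"
  using path_flow_until_station before_arrival by simp

lemma path_step_flow:
  assumes "active i" "st i \<le> t" "t < arrival i"
  shows "h (Aux (agent_path i t) t) (Loc (agent_path i (Suc t)) (Suc t)) = 1"
  using flow_to_successor[OF path_flow[OF assms(1,2)]] before_arrival[OF assms(2,3)] assms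
  by (simp add: at_station_def agent_path_Suc)

lemma station_slot:
  assumes "active i"
  obtains j where "station i = Some j" "j < N" "slot i < K" "arrival i = slot i * T"
    "agent_path i (arrival i) = g j" "h (Aux (g j) (slot i * T)) (Slot j (slot i)) = 1"
proof -
  let ?x = "Aux (agent_path i (arrival i)) (arrival i)"
  have "\<exists>j k. h ?x (Slot j k) \<noteq> 0"
    using arrival(2)[OF assms] by (simp add: at_station_def)
  then obtain k where k: "h ?x (Slot (the (station i)) k) \<noteq> 0"
    using someI_ex[of "\<lambda>j. \<exists>k. h ?x (Slot j k) \<noteq> 0"] assms by (auto simp: station_def)
  moreover have "station i = Some (the (station i))"
    using assms by (simp add: station_def)
  moreover from cap_nonzero_if_flow[OF flow k] have "the (station i) < N" "k < K"
    "agent_path i (arrival i) = g (the (station i))" "arrival i = k * T"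
    by (simp_all add: pito_cap_def split: if_splits)
  moreover have "slot i = k" using \<open>arrival i = k * T\<close> T_pos by (simp add: slot_def)
  ultimately show ?thesis using that flow_eq_1[OF flow k] by simp
qed

definition entry :: "nat \<Rightarrow> nat \<Rightarrow> 'v pnode" where
  "entry i t = (if t = st i then Agent i else Aux (agent_path i (t - 1)) (t - 1))"

lemma entry_flow:
  assumes "active i" "st i \<le> t" "t \<le> arrival i"
  shows "h (entry i t) (Loc (agent_path i t) t) = 1"
proof (cases "t = st i")
  case True
  then show ?thesis
    using flow_out_of_Agent[OF flow] assms(1) by (simp add: entry_def active_def agent_path_start)
next
  case False
  then obtain t' where "t = Suc t'" "st i \<le> t'" using assms(2) by (cases t) auto
  then show ?thesis using path_step_flow assms by (simp add: entry_def)
qed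

lemma agent_paths_disjoint:
  "active i \<Longrightarrow> active i' \<Longrightarrow> st i \<le> t \<Longrightarrow> t \<le> arrival i \<Longrightarrow> st i' \<le> t \<Longrightarrow> t \<le> arrival i'
    \<Longrightarrow> agent_path i t = agent_path i' t \<Longrightarrow> i = i'"
proof (induction t arbitrary: i i' rule: less_induct)
  case (less t)
  have entry: "entry i t = entry i' t"
    using inflow_Loc_unique[OF flow] entry_flow less.prems by (metis zero_neq_one)
  show ?case
  proof (cases "t = st i")
    case True
    with entry show ?thesis by (simp add: entry_def split: if_splits)
  next
    case False
    with entry have "t \<noteq> st i'" "agent_path i (t - 1) = agent_path i' (t - 1)"
      by (simp_all add: entry_def split: if_splits)
    with False less.prems show ?thesis by (intro less.IH[of "t - 1"]) auto
  qed
qed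

lemma used_Loc_on_path:
  "h (Loc u t) (Aux u t) = 1 \<Longrightarrow> \<exists>i. active i \<and> st i \<le> t \<and> t \<le> arrival i \<and> agent_path i t = u"
proof (induction t arbitrary: u rule: less_induct)
  case (less t)
  obtain y where y: "h y (Loc u t) \<noteq> 0"
    using Loc_used_iff[OF flow] less.prems by blast
  from cap_nonzero_if_flow[OF flow y] show ?case
  proof (cases rule: cap_into_Loc)
    case (1 i)
    then have "active i"
      using y flow_out_of_Agent[OF flow] flow_eq_1[OF flow, of Src "Agent i"] by (simp add: active_def)
    then show ?thesis using 1 arrival(1) agent_path_start by blast
  next
    case (2 v t')
    with y have y': "h (Aux v t') (Loc u t) \<noteq> 0" by simp
    then have "h (Loc v t') (Aux v t') = 1" using Aux_used_iff[OF flow] by blast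
    with less.IH 2 obtain i where i: "active i" "st i \<le> t'" "t' \<le> arrival i" "agent_path i t' = v"
      by blast
    have "t' \<noteq> arrival i"
    proof
      assume "t' = arrival i"
      then obtain j k where "h (Aux v t') (Slot j k) \<noteq> 0"
        using arrival(2)[OF i(1)] i(4) by (auto simp: at_station_def)
      with outflow_Aux_unique[OF flow y'] show False by blast
    qed
    then have "h (Aux v t') (Loc (agent_path i t) t) = 1"
      using path_step_flow[of i t'] i 2 by simp
    then have "agent_path i t = u"
      using outflow_Aux_unique[OF flow y'] by (metis pnode.inject(2) zero_neq_one)
    then show ?thesis using i 2 \<open>t' \<noteq> arrival i\<close> by auto
  qed
qed

lemma station_some_iff: "station i \<noteq> None \<longleftrightarrow> active i"
  by (simp add: station_def)

lemma slot_flow_assigned: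
  assumes slot_flow: "h (Aux (g j) (k * T)) (Slot j k) \<noteq> 0" and "j < N"
  shows "\<exists>i<M. station i = Some j \<and> slot i = k"
proof -
  have "h (Loc (g j) (k * T)) (Aux (g j) (k * T)) = 1"
    using Aux_used_iff[OF flow] slot_flow by blast
  then obtain i where i: "active i" "st i \<le> k * T" "k * T \<le> arrival i" "agent_path i (k * T) = g j"
    using used_Loc_on_path by blast
  have "k * T = arrival i"
  proof (rule ccontr)
    assume "k * T \<noteq> arrival i"
    then have "h (Aux (g j) (k * T)) (Loc (agent_path i (Suc (k * T))) (Suc (k * T))) = 1"
      using path_step_flow[of i "k * T"] i by simp
    then show False
      using outflow_Aux_unique[OF flow slot_flow, of "Loc (agent_path i (Suc (k * T))) (Suc (k * T))"]
      by simp
  qed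
  moreover obtain j' where "station i = Some j'" "j' < N" "arrival i = slot i * T" "agent_path i (arrival i) = g j'"
    using station_slot[OF i(1)] by metis
  moreover have "i < M" using i(1) by (simp add: active_def)
  ultimately show ?thesis
    using i(4) inj_onD[OF inj_g, of j' j] \<open>j < N\<close> T_pos by auto
qed

lemma present_iff: "present st station slot T i t \<longleftrightarrow> active i \<and> st i \<le> t \<and> t \<le> arrival i"
proof -
  have "active i \<Longrightarrow> slot i * T = arrival i" using station_slot by metis
  then show ?thesis using station_some_iff[of i] unfolding present_def by auto
qed

lemma agent_path_step:
  assumes "active i" "st i \<le> t" "t < arrival i"
  shows "(agent_path i t, agent_path i (Suc t)) \<in> E \<or> agent_path i (Suc t) = agent_path i t"
  using cap_move[OF cap_nonzero_if_flow[OF flow]] path_step_flow[OF assms] by (metis zero_neq_one)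

lemma distinct_slots:
  assumes "active i" "active i'" "i \<noteq> i'" "station i = station i'"
  shows "slot i \<noteq> slot i'"
proof
  assume "slot i = slot i'"
  moreover obtain j where "station i = Some j" "arrival i = slot i * T" "agent_path i (arrival i) = g j"
    using station_slot[OF assms(1)] by metis
  moreover obtain j' where "station i' = Some j'" "arrival i' = slot i' * T"
    "agent_path i' (arrival i') = g j'"
    using station_slot[OF assms(2)] by metis
  ultimately show False
    using agent_paths_disjoint[OF assms(1,2), of "arrival i"] arrival[OF assms(1)] arrival[OF assms(2)]
      assms(3,4) by simp
qed

lemma no_edge_swap:
  assumes "active i" "active i'" "i \<noteq> i'" "st i \<le> t" "t < arrival i" "st i' \<le> t" "t < arrival i'"
  shows "\<not> (agent_path i t = agent_path i' (Suc t) \<and> agent_path i (Suc t) = agent_path i' t)"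
proof
  assume swap: "agent_path i t = agent_path i' (Suc t) \<and> agent_path i (Suc t) = agent_path i' t"
  moreover have "agent_path i t \<noteq> agent_path i' t"
    using agent_paths_disjoint[OF assms(1,2,4) less_imp_le[OF assms(5)] assms(6) less_imp_le[OF assms(7)]]
      assms(3) by blast
  ultimately show False
    using swap_free path_step_flow[OF assms(1,4,5)] path_step_flow[OF assms(2,6,7)]
    unfolding swap_free_def by metis
qed

lemma is_tapf_solution: "tapf_solution E N g M sv st T K station slot agent_path"
  unfolding tapf_solution_def
proof (intro conjI allI impI)
  fix i j assume "i < M" "station i = Some j"
  then have active: "active i" using station_some_iff by blast
  then obtain j' where j': "station i = Some j'" "j' < N" "slot i < K" "arrival i = slot i * T"
    "agent_path i (arrival i) = g j'"
    using station_slot by metis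
  with \<open>station i = Some j\<close> have "j' = j" by simp
  show "j < N" "slot i < K" "st i \<le> slot i * T" "agent_path i (st i) = sv i" "agent_path i (slot i * T) = g j"
    using j' \<open>j' = j\<close> arrival(1)[OF active] agent_path_start by simp_all
  show "(agent_path i t, agent_path i (Suc t)) \<in> E \<or> agent_path i (Suc t) = agent_path i t"
    if "st i \<le> t \<and> t < slot i * T" for t
    using agent_path_step[OF active] that j'(4) by simp
next
  fix i i' assume "i < M" "i' < M" "i \<noteq> i'" "station i \<noteq> None" "station i = station i'"
  then show "slot i \<noteq> slot i'"
    using distinct_slots station_some_iff by metis
next
  fix i i' t assume "i < M" "i' < M" "i \<noteq> i'" "present st station slot T i t" "present st station slot T i' t"
  then show "agent_path i t \<noteq> agent_path i' t"
    using agent_paths_disjoint by (auto simp: present_iff)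
next
  fix i i' t assume "i < M" "i' < M" "i \<noteq> i'"
    "present st station slot T i t" "present st station slot T i (Suc t)"
    "present st station slot T i' t" "present st station slot T i' (Suc t)"
  then show "\<not> (agent_path i t = agent_path i' (Suc t) \<and> agent_path i (Suc t) = agent_path i' t)"
    using no_edge_swap by (simp add: present_iff)
qed

lemma occupied_slots_iff:
  assumes "j < N" "k < K"
  shows "(j, k) \<in> occupied_slots N M K station slot \<longleftrightarrow> h (Aux (g j) (k * T)) (Slot j k) = 1"
proof
  assume "(j, k) \<in> occupied_slots N M K station slot"
  then obtain i where i: "station i = Some j" "slot i = k"
    by (auto simp: occupied_slots_def)
  then have "active i" using station_some_iff by blast
  then obtain j' where "station i = Some j'" "h (Aux (g j') (slot i * T)) (Slot j' (slot i)) = 1"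
    using station_slot by metis
  with i show "h (Aux (g j) (k * T)) (Slot j k) = 1" by simp
next
  assume "h (Aux (g j) (k * T)) (Slot j k) = 1"
  then show "(j, k) \<in> occupied_slots N M K station slot"
    using slot_flow_assigned assms by (force simp: occupied_slots_def)
qed

end

section \<open>The flow of a TAPF solution\<close>

lemma route_index_cases:
  assumes "(m :: nat) < 2 * l + 5"
  obtains "m = 0" | "m = 1" | d where "d \<le> l" "m = 2 + 2 * d" | d where "d \<le> l" "m = 3 + 2 * d"
  | "m = 2 * l + 4"
proof -
  have "m = 0 \<or> m = 1 \<or> (\<exists>d\<le>l. m = 2 + 2 * d) \<or> (\<exists>d\<le>l. m = 3 + 2 * d) \<or> m = 2 * l + 4"
    using assms by presburger
  then show ?thesis using that by blast
qed

locale pito_solution = pito_network V E N M T K g sv st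
  for V :: "'v set" and E N M T K g sv st +
  fixes asg :: "nat \<Rightarrow> nat option" and kk :: "nat \<Rightarrow> nat" and \<pi> :: "nat \<Rightarrow> nat \<Rightarrow> 'v"
  assumes solution: "tapf_solution E N g M sv st T K asg kk \<pi>"
begin

definition assigned :: "nat set" where
  "assigned = {i. i < M \<and> asg i \<noteq> None}"

definition duration :: "nat \<Rightarrow> nat" where
  "duration i = kk i * T - st i"

text \<open>
  The unit path of agent i: Src, a_i, then for d = 0, ..., duration i the vertices u_s and u'_s
  at positions 2 + 2d and 3 + 2d, where s = st i + d and u = \<pi> i s, then s_{j,kk i} and Snk.
\<close>

definition route :: "nat \<Rightarrow> nat \<Rightarrow> 'v pnode" where
  "route i m =
    (if m = 0 then Src
     else if m = 1 then Agent i
     else if m < 2 * duration i + 4 then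
       (let s = st i + (m - 2) div 2 in if even m then Loc (\<pi> i s) s else Aux (\<pi> i s) s)
     else if m = 2 * duration i + 4 then Slot (the (asg i)) (kk i)
     else Snk)"

abbreviation route_edges :: "nat \<Rightarrow> ('v pnode \<times> 'v pnode) set" where
  "route_edges i \<equiv> walk_edges (route i) (2 * duration i + 5)"

definition solution_flow :: "'v pnode \<Rightarrow> 'v pnode \<Rightarrow> nat" where
  "solution_flow x y = (\<Sum>i\<in>assigned. of_bool ((x, y) \<in> route_edges i))"

lemma finite_assigned: "finite assigned"
  unfolding assigned_def by simp

lemma assigned_agent:
  assumes "i \<in> assigned"
  shows "i < M" "asg i = Some (the (asg i))" "the (asg i) < N" "kk i < K"
    "st i + duration i = kk i * T" "\<pi> i (st i) = sv i" "\<pi> i (kk i * T) = g (the (asg i))"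
  using assms solution unfolding assigned_def tapf_solution_def duration_def by auto

lemma assigned_arrival_in_window:
  assumes "i \<in> assigned" shows "kk i * T \<le> (K - 1) * T"
proof -
  have "kk i \<le> K - 1" using assigned_agent(4)[OF assms] by linarith
  then show ?thesis by (rule mult_le_mono1)
qed

lemma assigned_step:
  "i \<in> assigned \<Longrightarrow> st i \<le> t \<Longrightarrow> t < kk i * T \<Longrightarrow> (\<pi> i t, \<pi> i (Suc t)) \<in> E \<or> \<pi> i (Suc t) = \<pi> i t"
  using solution unfolding assigned_def tapf_solution_def by auto

definition route_index :: "nat \<Rightarrow> 'v pnode \<Rightarrow> nat" where
  "route_index i x = (case x of Src \<Rightarrow> 0 | Agent _ \<Rightarrow> 1
     | Loc _ s \<Rightarrow> 2 + 2 * (s - st i) | Aux _ s \<Rightarrow> 3 + 2 * (s - st i)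
     | Slot _ _ \<Rightarrow> 2 * duration i + 4 | Snk \<Rightarrow> 2 * duration i + 5)"

lemma route_index_route: "m \<le> 2 * duration i + 5 \<Longrightarrow> route_index i (route i m) = m"
proof (cases "m = 2 * duration i + 5")
  case False
  moreover assume "m \<le> 2 * duration i + 5"
  ultimately have "m < 2 * duration i + 5" by simp
  then show ?thesis
    by (cases rule: route_index_cases) (simp_all add: route_def Let_def route_index_def)
qed (simp add: route_def route_index_def)

lemma inj_route: "inj_on (route i) {..2 * duration i + 5}"
  by (rule inj_on_inverseI[where g = "route_index i"]) (simp add: route_index_route)

lemma route_in_V:
  assumes "i \<in> assigned" "st i \<le> s" "s \<le> kk i * T" shows "\<pi> i s \<in> V"
  using assms(2,3)
proof (induction s rule: dec_induct)
  case base
  then show ?case using assigned_agent[OF assms(1)] start_in_window by simp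
next
  case (step t)
  then show ?case using assigned_step[OF assms(1), of t] E_subset by auto
qed

lemma cap_route:
  assumes i: "i \<in> assigned" and m: "m < 2 * duration i + 5"
  shows "cap (route i m) (route i (Suc m)) \<noteq> 0"
  using m
proof (cases rule: route_index_cases)
  case 1
  then show ?thesis using assigned_agent[OF i] by (simp add: route_def pito_cap_def)
next
  case 2
  then show ?thesis using assigned_agent[OF i] by (simp add: route_def pito_cap_def)
next
  case (3 d)
  moreover have "st i + d \<le> kk i * T" using 3 assigned_agent(5)[OF i] by simp
  then have "\<pi> i (st i + d) \<in> V" "st i + d \<le> (K - 1) * T"
    using route_in_V[OF i] order_trans[OF _ assigned_arrival_in_window[OF i]] by auto
  ultimately show ?thesis by (simp add: route_def Let_def pito_cap_def)
next
  case (4 d)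
  show ?thesis
  proof (cases "d = duration i")
    case True
    with 4 show ?thesis using assigned_agent[OF i] by (simp add: route_def Let_def pito_cap_def)
  next
    case False
    with 4 have "st i + d < kk i * T" using assigned_agent[OF i] by simp
    moreover from this have "st i + d < (K - 1) * T"
      using order_less_le_trans[OF _ assigned_arrival_in_window[OF i]] by blast
    ultimately show ?thesis
      using 4 False route_in_V[OF i] assigned_step[OF i]
      by (auto simp: route_def Let_def pito_cap_def)
  qed
next
  case 5
  then show ?thesis using assigned_agent[OF i] by (simp add: route_def pito_cap_def)
qed

lemma route_nodes:
  assumes i: "i \<in> assigned" and m: "m \<le> 2 * duration i + 5"
  obtains "route i m = Src" | "route i m = Agent i"
  | s where "present st asg kk T i s" "route i m = Loc (\<pi> i s) s"
  | s where "present st asg kk T i s" "route i m = Aux (\<pi> i s) s"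
  | "route i m = Slot (the (asg i)) (kk i)" | "route i m = Snk"
proof (cases "m = 2 * duration i + 5")
  case False
  with m have "m < 2 * duration i + 5" by simp
  moreover have "present st asg kk T i (st i + d)" if "d \<le> duration i" for d
    using that assigned_agent(5)[OF i] i by (auto simp: present_def assigned_def)
  ultimately show ?thesis
    using that by (cases rule: route_index_cases) (simp_all add: route_def Let_def)
qed (use that in \<open>simp add: route_def\<close>)

lemma route_node_owner:
  assumes "i \<in> assigned" "i' \<in> assigned" "m \<le> 2 * duration i + 5" "m' \<le> 2 * duration i' + 5"
    and same: "route i m = route i' m'" and "route i m \<noteq> Src" "route i m \<noteq> Snk"
  shows "i = i'"
proof -
  have agents: "i < M" "i' < M" "asg i \<noteq> None" using assms(1,2) by (simp_all add: assigned_def)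
  have "present st asg kk T i s \<Longrightarrow> present st asg kk T i' s \<Longrightarrow> \<pi> i s = \<pi> i' s \<Longrightarrow> i = i'" for s
    using solution agents unfolding tapf_solution_def by blast
  moreover have "asg i = asg i' \<Longrightarrow> kk i = kk i' \<Longrightarrow> i = i'"
    using solution agents unfolding tapf_solution_def by blast
  ultimately show ?thesis
    using route_nodes[OF assms(1,3)] route_nodes[OF assms(2,4)] same assms(6,7)
      assigned_agent(2)[OF assms(1)] assigned_agent(2)[OF assms(2)]
    by (smt (verit) pnode.distinct pnode.inject)
qed

lemma route_edge_owner:
  assumes "i \<in> assigned" "i' \<in> assigned" "(x, y) \<in> route_edges i" "(x, y) \<in> route_edges i'"
  shows "i = i'"
proof -
  obtain m where m: "m < 2 * duration i + 5" "x = route i m" "y = route i (Suc m)"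
    using assms(3) by (auto simp: walk_edges_def)
  obtain m' where m': "m' < 2 * duration i' + 5" "x = route i' m'" "y = route i' (Suc m')"
    using assms(4) by (auto simp: walk_edges_def)
  have "x \<noteq> Snk"
    using route_index_route[of m i] m by (auto simp: route_index_def)
  show ?thesis
  proof (cases "x = Src")
    case True
    then have "m = 0" "m' = 0"
      using route_index_route[of m i] route_index_route[of m' i'] m m' by (auto simp: route_index_def)
    then show ?thesis using m m' by (simp add: route_def)
  next
    case False
    with \<open>x \<noteq> Snk\<close> show ?thesis
      using route_node_owner[OF assms(1,2), of m m'] m m' by simp
  qed
qed

lemma solution_flow_le_cap: "solution_flow x y \<le> cap x y"
proof (cases "\<exists>i\<in>assigned. (x, y) \<in> route_edges i")
  case True
  then obtain i where i: "i \<in> assigned" "(x, y) \<in> route_edges i" ..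
  have "solution_flow x y = card (assigned \<inter> {i. (x, y) \<in> route_edges i})"
    by (simp add: solution_flow_def finite_assigned)
  also have "assigned \<inter> {i. (x, y) \<in> route_edges i} = {i}"
    using route_edge_owner[OF _ i(1) _ i(2)] i by blast
  finally show ?thesis
    using cap_route[OF i(1)] i(2) by (fastforce simp: walk_edges_def)
next
  case False
  then show ?thesis by (simp add: solution_flow_def)
qed

lemma route_edges_in_nodes: "i \<in> assigned \<Longrightarrow> (x, y) \<in> route_edges i \<Longrightarrow> x \<in> nodes \<and> y \<in> nodes"
  using cap_route cap_nonzero_nodes by (fastforce simp: walk_edges_def)

lemma solution_inflow: "(\<Sum>y\<in>nodes. solution_flow y x) = (\<Sum>i\<in>assigned. card {y. (y, x) \<in> route_edges i})"
proof -
  have "(\<Sum>y\<in>nodes. solution_flow y x) = (\<Sum>i\<in>assigned. card (nodes \<inter> {y. (y, x) \<in> route_edges i}))"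
    unfolding solution_flow_def by (subst sum.swap) (simp add: finite_nodes)
  also have "\<dots> = (\<Sum>i\<in>assigned. card {y. (y, x) \<in> route_edges i})"
    using route_edges_in_nodes by (intro sum.cong refl arg_cong[where f = card]) blast
  finally show ?thesis .
qed

lemma solution_outflow: "(\<Sum>y\<in>nodes. solution_flow x y) = (\<Sum>i\<in>assigned. card {y. (x, y) \<in> route_edges i})"
proof -
  have "(\<Sum>y\<in>nodes. solution_flow x y) = (\<Sum>i\<in>assigned. card (nodes \<inter> {y. (x, y) \<in> route_edges i}))"
    unfolding solution_flow_def by (subst sum.swap) (simp add: finite_nodes)
  also have "\<dots> = (\<Sum>i\<in>assigned. card {y. (x, y) \<in> route_edges i})"
    using route_edges_in_nodes by (intro sum.cong refl arg_cong[where f = card]) blast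
  finally show ?thesis .
qed

lemma solution_flow_is_flow: "is_flow solution_flow"
  unfolding pito_flow_def
proof (intro conjI allI ballI)
  fix x y show "solution_flow x y \<le> cap x y" by (rule solution_flow_le_cap)
next
  fix x assume "x \<in> nodes - {Src, Snk}"
  then have "x \<noteq> route i 0" "x \<noteq> route i (2 * duration i + 5)" for i
    by (simp_all add: route_def)
  then show "(\<Sum>y\<in>nodes. solution_flow y x) = (\<Sum>y\<in>nodes. solution_flow x y)"
    unfolding solution_inflow solution_outflow
    using card_walk_edges_in_eq_out[OF inj_route] by simp
qed

lemma solution_flow_value: "flow_value V N M T K solution_flow = card assigned"
proof -
  have "{y. (Src, y) \<in> route_edges i} = {Agent i}" for i
  proof
    show "{y. (Src, y) \<in> route_edges i} \<subseteq> {Agent i}"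
    proof
      fix y assume "y \<in> {y. (Src, y) \<in> route_edges i}"
      then obtain m where "m < 2 * duration i + 5" "route i m = Src" "y = route i (Suc m)"
        by (auto simp: walk_edges_def)
      moreover from this have "m = 0"
        using route_index_route[of m i] by (simp add: route_index_def)
      ultimately show "y \<in> {Agent i}" by (simp add: route_def)
    qed
    have "(route i 0, route i 1) \<in> route_edges i"
      unfolding walk_edges_def by force
    then show "{Agent i} \<subseteq> {y. (Src, y) \<in> route_edges i}"
      by (simp add: route_def)
  qed
  then show ?thesis
    unfolding flow_value_def solution_outflow by simp
qed

lemma card_occupied_slots: "card (occupied_slots N M K asg kk) = card assigned"
proof -
  have "occupied_slots N M K asg kk = (\<lambda>i. (the (asg i), kk i)) ` assigned"
    using assigned_agent by (force simp: occupied_slots_def assigned_def)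
  moreover have "inj_on (\<lambda>i. (the (asg i), kk i)) assigned"
    using solution assigned_agent(2) unfolding tapf_solution_def assigned_def inj_on_def
    by (metis (no_types, lifting) mem_Collect_eq option.distinct(1) prod.inject)
  ultimately show ?thesis by (simp add: card_image)
qed

end

section \<open>Maximum flows minimise the idle time\<close>

context pito_network
begin

lemma flow_decomposition:
  assumes "is_flow f"
  obtains asg kk \<pi> where "tapf_solution E N g M sv st T K asg kk \<pi>"
    "\<And>i. i < M \<Longrightarrow> asg i \<noteq> None \<longleftrightarrow> f Src (Agent i) = 1"
    "\<And>j k. j < N \<Longrightarrow> k < K \<Longrightarrow>
       (j, k) \<in> occupied_slots N M K asg kk \<longleftrightarrow> f (Aux (g j) (k * T)) (Slot j k) = 1"
    "card (occupied_slots N M K asg kk) = flow_value V N M T K f"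
proof -
  obtain h where h: "is_flow h" "swap_free h" and agree: "\<And>x y. \<not> is_move x y \<Longrightarrow> h x y = f x y"
    using exists_swap_free_flow[OF assms] by blast
  interpret H: swap_free_flow V E N M T K g sv st h
    using h by unfold_locales
  interpret S: pito_solution V E N M T K g sv st H.station H.slot H.agent_path
    using H.is_tapf_solution by unfold_locales
  have Src_edges: "h Src y = f Src y" and Slot_edges: "h (Aux u t) (Slot j k) = f (Aux u t) (Slot j k)"
    for y u t j k
    using agree by (simp_all add: is_move_def)
  have "S.assigned = {i. i < M \<and> h Src (Agent i) = 1}"
    unfolding S.assigned_def H.station_some_iff H.active_def by auto
  then have "card (occupied_slots N M K H.station H.slot) = flow_value V N M T K f"
    using S.card_occupied_slots flow_value_eq_card[OF h(1)] Src_edges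
    by (simp add: flow_value_def)
  with that show ?thesis
    using H.is_tapf_solution H.station_some_iff H.occupied_slots_iff Src_edges Slot_edges
    by (simp add: H.active_def)
qed

lemma solution_flow_exists:
  assumes "tapf_solution E N g M sv st T K asg kk \<pi>"
  shows "\<exists>f. is_flow f \<and> flow_value V N M T K f = card (occupied_slots N M K asg kk)"
proof -
  interpret S: pito_solution V E N M T K g sv st asg kk \<pi>
    using assms by unfold_locales
  show ?thesis
    using S.solution_flow_is_flow S.solution_flow_value S.card_occupied_slots by auto
qed

end

theorem theorem2:
  fixes V :: "'v set" and E :: "('v \<times> 'v) set"
    and N M T K :: nat and g :: "nat \<Rightarrow> 'v" and sv :: "nat \<Rightarrow> 'v" and st :: "nat \<Rightarrow> nat"
    and f :: "'v pnode \<Rightarrow> 'v pnode \<Rightarrow> nat"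
  assumes "finite V" and "E \<subseteq> V \<times> V" and "sym E"
    and "\<forall>u\<in>V. \<forall>v\<in>V. (u, v) \<in> E\<^sup>*"
    and "\<forall>j<N. g j \<in> V" and "inj_on g {..<N}"
    and "\<forall>i<M. sv i \<in> V \<and> st i \<le> (K - 1) * T"
    and "T > 0" and "K \<ge> 1"
    and "pito_max_flow V E N g M sv st T K f"
  shows "\<exists>asg kk \<pi>. tapf_solution E N g M sv st T K asg kk \<pi>
           \<and> (\<forall>i<M. asg i \<noteq> None \<longleftrightarrow> f Src (Agent i) = 1)
           \<and> (\<forall>j<N. \<forall>k<K. (j, k) \<in> occupied_slots N M K asg kk
                  \<longleftrightarrow> f (Aux (g j) (k * T)) (Slot j k) = 1)
           \<and> (\<forall>asg' kk' \<pi>'. tapf_solution E N g M sv st T K asg' kk' \<pi>' \<longrightarrow>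
                  idle_time N M T K asg kk \<le> idle_time N M T K asg' kk')"
proof -
  interpret pito_network V E N M T K g sv st
    using assms by unfold_locales auto
  have f: "pito_flow V E N g M sv st T K f"
    and f_max: "\<And>f'. pito_flow V E N g M sv st T K f' \<Longrightarrow> flow_value V N M T K f' \<le> flow_value V N M T K f"
    using assms(10) unfolding pito_max_flow_def by auto
  obtain asg kk \<pi> where sol: "tapf_solution E N g M sv st T K asg kk \<pi>"
    and "\<And>i. i < M \<Longrightarrow> asg i \<noteq> None \<longleftrightarrow> f Src (Agent i) = 1"
    and "\<And>j k. j < N \<Longrightarrow> k < K \<Longrightarrow>
       (j, k) \<in> occupied_slots N M K asg kk \<longleftrightarrow> f (Aux (g j) (k * T)) (Slot j k) = 1"
    and occupied: "card (occupied_slots N M K asg kk) = flow_value V N M T K f"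
    using flow_decomposition[OF f] by blast
  moreover have "idle_time N M T K asg kk \<le> idle_time N M T K asg' kk'"
    if sol': "tapf_solution E N g M sv st T K asg' kk' \<pi>'" for asg' kk' \<pi>'
  proof -
    obtain f' where "is_flow f'" "flow_value V N M T K f' = card (occupied_slots N M K asg' kk')"
      using solution_flow_exists[OF sol'] by blast
    then have "card (occupied_slots N M K asg' kk') \<le> card (occupied_slots N M K asg kk)"
      using f_max[of f'] occupied by simp
    then show ?thesis
      unfolding idle_time_def by (intro mult_le_mono2 diff_le_mono2)
  qed
  ultimately show ?thesis by blast
qed

end
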